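(* Let $\mathcal C$ be the UM simplex $(n,k)$ code. Then for every $s\ge 0$ the binary block code generated by $G_{\rm total}$ has minimum distance $3\cdot2^{k-1}$. Moreover, the column distances and free distance of $\mathcal C$ satisfy $d_0=2^k$ and $d_{free}=d_j=3\cdot2^{k-1}$ for all $j\ge1$.
   Context: Let $k\ge2$ and let $G\in\mathbb F_2^{k\times(2^k-1)}$ be a generator matrix of the binary simplex code (columns are all distinct nonzero vectors of $\mathbb F_2^k$); set $n=2(2^k-1)$. The UM simplex $(n,k)$ code $\mathcal C$ is the binary convolutional code $\{u(D)G(D): u(D)\in\mathbb F_2^k[D]\}\subseteq\mathbb F_2^n[D]$ with encoder $G(D)=G_0+G_1D$, $G_0=[G\ G]$, $G_1=[G\ 0]\in\mathbb F_2^{k\times n}$. For $u(D)=\sum_{i=0}^s u_iD^i$, the codeword $c(D)=\sum_{i=0}^{s+1}c_iD^i$ satisfies $(c_0,\dots,c_{s+1})=(u_0,\dots,u_s)G_{\rm total}$, where $G_{\rm total}\in\mathbb F_2^{(s+1)k\times(s+2)n}$ is the block matrix whose $i$-th block row ($i=0,\dots,s$) has $G_0$ in block column $i$, $G_1$ in block column $i+1$ and zeros elsewhere (block columns of width $n$). The free distance is $d_{free}=\min\{wt(c(D)): 0\ne c(D)\in\mathcal C\}$ with $wt(c(D))=\sum_i wt(c_i)$ (Hamming weight). The $j$-th column distance is $d_j=\min\{wt(c_0+c_1D+\dots+c_jD^j): \sum_i c_iD^i\in\mathcal C,\ c_0\ne0\}$. *)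

theory Defs
  imports "HOL-Library.Z2" "HOL-Computational_Algebra.Polynomial"
begin

text \<open>A vector of length N is a function nat => bit, only indices < N are relevant.
  A matrix is a function row => column => bit.\<close>

type_synonym f2vec = "nat \<Rightarrow> bit"
type_synonym f2mat = "nat \<Rightarrow> nat \<Rightarrow> bit"

definition col :: "nat \<Rightarrow> f2mat \<Rightarrow> nat \<Rightarrow> f2vec" where
  "col k M j = (\<lambda>i. if i < k then M i j else 0)"

definition is_simplex_gen :: "nat \<Rightarrow> f2mat \<Rightarrow> bool" where
  "is_simplex_gen k G \<longleftrightarrow>
     bij_betw (col k G) {..<2^k - 1} {v. (\<forall>i\<ge>k. v i = 0) \<and> v \<noteq> (\<lambda>_. 0)}"

definition simplex_len :: "nat \<Rightarrow> nat" where
  "simplex_len k = 2^k - 1"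

definition um_n :: "nat \<Rightarrow> nat" where
  "um_n k = 2 * simplex_len k"

definition um_G0 :: "nat \<Rightarrow> f2mat \<Rightarrow> f2mat" where
  "um_G0 k G i j =
     (if i < k \<and> j < simplex_len k then G i j
      else if i < k \<and> simplex_len k \<le> j \<and> j < 2 * simplex_len k then G i (j - simplex_len k)
      else 0)"

definition um_G1 :: "nat \<Rightarrow> f2mat \<Rightarrow> f2mat" where
  "um_G1 k G i j = (if i < k \<and> j < simplex_len k then G i j else 0)"

text \<open>G_total in F_2^{(s+1)k x (s+2)n}: block row bi has G_0 in block column bi
  and G_1 in block column bi+1.\<close>
definition um_Gtotal :: "nat \<Rightarrow> f2mat \<Rightarrow> nat \<Rightarrow> f2mat" where
  "um_Gtotal k G s r c =
     (if r < (s + 1) * k \<and> c < (s + 2) * um_n k then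
        (if c div um_n k = r div k then um_G0 k G (r mod k) (c mod um_n k)
         else if c div um_n k = r div k + 1 then um_G1 k G (r mod k) (c mod um_n k)
         else 0)
      else 0)"

definition vecmat :: "nat \<Rightarrow> f2vec \<Rightarrow> f2mat \<Rightarrow> f2vec" where
  "vecmat K u M = (\<lambda>j. \<Sum>i<K. u i * M i j)"

definition hamming_dist :: "nat \<Rightarrow> f2vec \<Rightarrow> f2vec \<Rightarrow> nat" where
  "hamming_dist N x y = card {j. j < N \<and> x j \<noteq> y j}"

definition block_code :: "nat \<Rightarrow> nat \<Rightarrow> f2mat \<Rightarrow> f2vec set" where
  "block_code K N M = {(\<lambda>j. if j < N then vecmat K u M j else 0) | u. True}"

definition min_dist :: "nat \<Rightarrow> f2vec set \<Rightarrow> nat" where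
  "min_dist N C = Inf {hamming_dist N x y | x y. x \<in> C \<and> y \<in> C \<and> x \<noteq> y}"

definition um_GD :: "nat \<Rightarrow> f2mat \<Rightarrow> nat \<Rightarrow> nat \<Rightarrow> bit poly" where
  "um_GD k G i j = [: um_G0 k G i j, um_G1 k G i j :]"

definition um_code :: "nat \<Rightarrow> f2mat \<Rightarrow> (nat \<Rightarrow> bit poly) set" where
  "um_code k G = {c. \<exists>u :: nat \<Rightarrow> bit poly.
      c = (\<lambda>j. if j < um_n k then (\<Sum>i<k. u i * um_GD k G i j) else 0)}"

definition poly_wt :: "nat \<Rightarrow> (nat \<Rightarrow> bit poly) \<Rightarrow> nat" where
  "poly_wt N c = (\<Sum>j<N. card {t. coeff (c j) t \<noteq> 0})"

definition trunc_wt :: "nat \<Rightarrow> nat \<Rightarrow> (nat \<Rightarrow> bit poly) \<Rightarrow> nat" where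
  "trunc_wt N J c = (\<Sum>j<N. card {t. t \<le> J \<and> coeff (c j) t \<noteq> 0})"

definition free_distance :: "nat \<Rightarrow> f2mat \<Rightarrow> nat" where
  "free_distance k G = Inf {poly_wt (um_n k) c | c. c \<in> um_code k G \<and> (\<exists>j<um_n k. c j \<noteq> 0)}"

definition column_distance :: "nat \<Rightarrow> f2mat \<Rightarrow> nat \<Rightarrow> nat" where
  "column_distance k G J = Inf {trunc_wt (um_n k) J c | c. c \<in> um_code k G \<and> (\<exists>j<um_n k. coeff (c j) 0 \<noteq> 0)}"

end

(* A nonzero information vector u maps to a simplex codeword u G of weight 2^(k-1). Block t of
   a UM codeword is c_t = u_t G_0 + u_{t-1} G_1 = [(u_t + u_{t-1}) G | u_t G]. At the first
   index t with u_t nonzero this block is [u_t G | u_t G], of weight 2^k; right after the last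
   such index it is [u_{t-1} G | 0], of weight 2^(k-1). So every nonzero codeword, of the
   convolutional code as well as of its truncation generated by G_total, has weight at least
   3 * 2^(k-1), and u(D) = e_1 attains it. Looking only at blocks 0 and 1 gives the column
   distances in the same way. *)

theory Submission
  imports Defs "HOL-Library.Function_Algebras"
begin

(* Keep sums and products of bits as field arithmetic instead of xor/and. *)
declare add_bit_eq_xor[simp del] mult_bit_eq_and[simp del]

section \<open>Weights of simplex codewords\<close>

lemma pow2_eq_double: "k \<ge> 1 \<Longrightarrow> (2::nat) ^ k = 2 * 2 ^ (k - 1)"
  by (simp flip: power_Suc)

definition hamming_wt :: "nat \<Rightarrow> f2vec \<Rightarrow> nat" where
  "hamming_wt N x = card {j. j < N \<and> x j \<noteq> 0}"

definition bitvecs :: "nat \<Rightarrow> f2vec set" where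
  "bitvecs k = {v. \<forall>i\<ge>k. v i = 0}"

lemma card_bitvecs: "card (bitvecs k) = 2 ^ k"
proof -
  have "bij_betw (\<lambda>v. {i. v i = 1}) (bitvecs k) (Pow {..<k})"
    by (rule bij_betw_byWitness[where f' = "\<lambda>S i. if i \<in> S then 1 else 0"])
      (auto simp: bitvecs_def fun_eq_iff intro: leI)
  then show ?thesis
    by (simp add: bij_betw_same_card card_Pow)
qed

lemma finite_bitvecs: "finite (bitvecs k)"
  using card_bitvecs[of k] card.infinite by fastforce

definition dot :: "nat \<Rightarrow> f2vec \<Rightarrow> f2vec \<Rightarrow> bit" where
  "dot k a v = (\<Sum>i<k. a i * v i)"

lemma dot_flip:
  assumes "i0 < k"
  shows "dot k a (v(i0 := v i0 + 1)) = dot k a v + a i0"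
proof -
  have "dot k a (v(i0 := v i0 + 1)) = a i0 * (v i0 + 1) + (\<Sum>i\<in>{..<k}-{i0}. a i * v i)"
    unfolding dot_def using assms by (subst sum.remove[of _ i0]) (auto intro!: sum.cong)
  moreover have "dot k a v = a i0 * v i0 + (\<Sum>i\<in>{..<k}-{i0}. a i * v i)"
    unfolding dot_def using assms by (subst sum.remove[of _ i0]) auto
  ultimately show ?thesis
    by (simp only: distrib_left mult_1_right add_ac)
qed

text \<open>Flipping a coordinate on which the functional does not vanish is an involution of
  \<^term>\<open>bitvecs k\<close> that swaps its kernel with the complement.\<close>
lemma card_dot_eq_1:
  assumes "i0 < k" and "a i0 \<noteq> 0"
  shows "card {v \<in> bitvecs k. dot k a v = 1} = 2 ^ (k - 1)"
proof -
  define flip where "flip v = v(i0 := v i0 + 1)" for v :: f2vec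
  define A0 where "A0 = {v \<in> bitvecs k. dot k a v = 0}"
  define A1 where "A1 = {v \<in> bitvecs k. dot k a v = 1}"
  have a: "a i0 = 1"
    using assms(2) by simp
  have "bij_betw flip A0 A1"
    by (rule bij_betw_byWitness[where f' = flip])
      (use assms(1) a dot_flip[OF assms(1)] in \<open>auto simp: A0_def A1_def flip_def bitvecs_def\<close>)
  then have "card A0 = card A1"
    by (rule bij_betw_same_card)
  moreover have "bitvecs k = A0 \<union> A1" and "A0 \<inter> A1 = {}"
    by (auto simp: A0_def A1_def)
  moreover have "finite A0" "finite A1"
    using finite_bitvecs[of k] by (auto simp: A0_def A1_def)
  ultimately have "2 ^ k = 2 * card A1"
    using card_bitvecs[of k] card_Un_disjoint by (metis mult_2)
  then show ?thesis
    using pow2_eq_double[of k] assms(1) by (simp add: A1_def)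
qed

definition nonzero_on :: "nat \<Rightarrow> f2vec \<Rightarrow> bool" where
  "nonzero_on k a \<longleftrightarrow> (\<exists>i<k. a i \<noteq> 0)"

lemma vecmat_eq_0: "\<not> nonzero_on k a \<Longrightarrow> vecmat k a M = 0"
  by (auto simp: nonzero_on_def vecmat_def fun_eq_iff intro!: sum.neutral)

lemma vecmat_add: "vecmat K (u + v) M = vecmat K u M + vecmat K v M"
  by (simp add: vecmat_def fun_eq_iff sum.distrib distrib_right)

lemma hamming_wt_simplex_codeword:
  assumes G: "is_simplex_gen k G" and a: "nonzero_on k a"
  shows "hamming_wt (simplex_len k) (vecmat k a G) = 2 ^ (k - 1)"
proof -
  obtain i0 where i0: "i0 < k" "a i0 \<noteq> 0"
    using a by (auto simp: nonzero_on_def)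
  define V where "V = {v::f2vec. (\<forall>i\<ge>k. v i = 0) \<and> v \<noteq> (\<lambda>_. 0)}"
  have bij: "bij_betw (col k G) {..<simplex_len k} V"
    using G by (simp add: is_simplex_gen_def simplex_len_def V_def)
  have vecmat_col: "vecmat k a G j = dot k a (col k G j)" for j
    by (auto simp: vecmat_def dot_def col_def intro!: sum.cong)
  have "bij_betw (col k G) {j. j < simplex_len k \<and> vecmat k a G j \<noteq> 0} {v \<in> V. dot k a v = 1}"
    by (rule bij_betw_subset[OF bij])
      (use bij in \<open>auto simp: vecmat_col bij_betw_def\<close>)
  then have "hamming_wt (simplex_len k) (vecmat k a G) = card {v \<in> V. dot k a v = 1}"
    by (simp add: hamming_wt_def bij_betw_same_card)
  also have "{v \<in> V. dot k a v = 1} = {v \<in> bitvecs k. dot k a v = 1}"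
    by (auto simp: V_def bitvecs_def dot_def)
  finally show ?thesis
    using card_dot_eq_1[of i0 k a] i0 by simp
qed

section \<open>Weights of the blocks of a UM codeword\<close>

lemma mult_add_less_mult:
  fixes q i N k :: nat
  assumes "q < N" and "i < k"
  shows "q * k + i < N * k"
proof -
  have "q * k + i < Suc q * k"
    using assms(2) by simp
  also have "\<dots> \<le> N * k"
    using assms(1) by (intro mult_le_mono1) simp
  finally show ?thesis .
qed

lemma sum_lessThan_mult_blocks:
  fixes f :: "nat \<Rightarrow> 'a::comm_monoid_add"
  shows "(\<Sum>r<N * k. f r) = (\<Sum>q<N. \<Sum>i<k. f (q * k + i))"
proof -
  have "(\<Sum>q<N. \<Sum>i<k. f (q * k + i)) = (\<Sum>(q, i)\<in>{..<N} \<times> {..<k}. f (q * k + i))"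
    by (rule sum.cartesian_product)
  also have "\<dots> = (\<Sum>r<N * k. f r)"
    by (rule sum.reindex_bij_witness[where i = "\<lambda>r. (r div k, r mod k)" and j = "\<lambda>(q, i). q * k + i"])
      (auto simp: less_mult_imp_div_less mult_add_less_mult intro!: mod_less_divisor gr0I)
  finally show ?thesis ..
qed

lemma card_div_mod_blocks:
  fixes T n :: nat and P :: "nat \<Rightarrow> nat \<Rightarrow> bool"
  shows "card {c. c < T * n \<and> P (c div n) (c mod n)} = (\<Sum>t<T. card {m. m < n \<and> P t m})"
proof -
  have card_eq: "card {x. x < N \<and> Q x} = (\<Sum>x<N. if Q x then 1 else 0)" for N and Q :: "nat \<Rightarrow> bool"
  proof -
    have "{x. x < N \<and> Q x} = {x \<in> {..<N}. Q x}"
      by auto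
    then show ?thesis
      by (simp add: sum.inter_filter[symmetric])
  qed
  show ?thesis
    unfolding card_eq sum_lessThan_mult_blocks by (intro sum.cong refl) simp
qed

lemma sum_card_swap:
  assumes "finite A" "finite B"
  shows "(\<Sum>a\<in>A. card {b\<in>B. P a b}) = (\<Sum>b\<in>B. card {a\<in>A. P a b})"
proof -
  have "(\<Sum>a\<in>A. card {b\<in>B. P a b}) = (\<Sum>a\<in>A. \<Sum>b\<in>B. if P a b then 1 else 0)"
    using assms by (simp add: sum.inter_filter[symmetric])
  also have "\<dots> = (\<Sum>b\<in>B. \<Sum>a\<in>A. if P a b then 1 else 0)"
    by (rule sum.swap)
  also have "\<dots> = (\<Sum>b\<in>B. card {a\<in>A. P a b})"
    using assms by (simp add: sum.inter_filter[symmetric])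
  finally show ?thesis .
qed

lemma vecmat_um_G0:
  assumes "m < um_n k"
  shows "vecmat k a (um_G0 k G) m = vecmat k a G (m mod simplex_len k)"
proof (cases "m < simplex_len k")
  case True
  then show ?thesis
    by (auto simp: vecmat_def um_G0_def intro!: sum.cong)
next
  case False
  then have "m mod simplex_len k = m - simplex_len k"
    using assms by (simp add: um_n_def le_mod_geq)
  then show ?thesis
    using assms False by (auto simp: vecmat_def um_G0_def um_n_def intro!: sum.cong)
qed

lemma vecmat_um_G1:
  "vecmat k a (um_G1 k G) m = (if m < simplex_len k then vecmat k a G m else 0)"
  by (auto simp: vecmat_def um_G1_def intro!: sum.neutral sum.cong)

text \<open>\<open>a G\<^sub>0 + b G\<^sub>1 = [(a + b) G | a G]\<close>\<close>
lemma hamming_wt_um_pair: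
  "hamming_wt (um_n k) (vecmat k a (um_G0 k G) + vecmat k b (um_G1 k G))
     = hamming_wt (simplex_len k) (vecmat k (a + b) G) + hamming_wt (simplex_len k) (vecmat k a G)"
proof -
  define L where "L = simplex_len k"
  define x where "x = vecmat k a (um_G0 k G) + vecmat k b (um_G1 k G)"
  have "hamming_wt (um_n k) x = card {c. c < 2 * L \<and> x ((c div L) * L + c mod L) \<noteq> 0}"
    by (simp add: hamming_wt_def um_n_def L_def)
  also have "\<dots> = (\<Sum>q<2. card {m. m < L \<and> x (q * L + m) \<noteq> 0})"
    by (rule card_div_mod_blocks)
  also have "\<dots> = card {m. m < L \<and> x m \<noteq> 0} + card {m. m < L \<and> x (L + m) \<noteq> 0}"
    by (simp add: numeral_2_eq_2)
  also have "{m. m < L \<and> x m \<noteq> 0} = {m. m < L \<and> vecmat k (a + b) G m \<noteq> 0}"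
    by (auto simp: x_def L_def um_n_def vecmat_um_G0 vecmat_um_G1 vecmat_add)
  also have "{m. m < L \<and> x (L + m) \<noteq> 0} = {m. m < L \<and> vecmat k a G m \<noteq> 0}"
    by (auto simp: x_def L_def um_n_def vecmat_um_G0 vecmat_um_G1)
  finally show ?thesis
    by (simp only: x_def L_def hamming_wt_def)
qed

definition um_block :: "nat \<Rightarrow> f2mat \<Rightarrow> (nat \<Rightarrow> f2vec) \<Rightarrow> nat \<Rightarrow> f2vec" where
  "um_block k G U t =
     vecmat k (U t) (um_G0 k G) + vecmat k (if t = 0 then 0 else U (t - 1)) (um_G1 k G)"

lemma um_block_eq_0:
  assumes "\<not> nonzero_on k (U t)" and "t = 0 \<or> \<not> nonzero_on k (U (t - 1))"
  shows "um_block k G U t = 0"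
  using assms by (auto simp: um_block_def vecmat_eq_0 nonzero_on_def)

lemma hamming_wt_um_block_start:
  assumes G: "is_simplex_gen k G" and k: "k \<ge> 1"
    and "nonzero_on k (U t)" and "t = 0 \<or> \<not> nonzero_on k (U (t - 1))"
  shows "hamming_wt (um_n k) (um_block k G U t) = 2 ^ k"
proof -
  have "vecmat k (if t = 0 then 0 else U (t - 1)) G = 0"
    using assms(4) by (auto simp: vecmat_eq_0 nonzero_on_def)
  then show ?thesis
    using hamming_wt_simplex_codeword[OF G assms(3)] pow2_eq_double[OF k]
    by (simp add: um_block_def hamming_wt_um_pair vecmat_add)
qed

lemma hamming_wt_um_block_end:
  assumes G: "is_simplex_gen k G"
    and "t > 0" and "\<not> nonzero_on k (U t)" and "nonzero_on k (U (t - 1))"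
  shows "hamming_wt (um_n k) (um_block k G U t) = 2 ^ (k - 1)"
proof -
  have "vecmat k (U t) G = 0"
    using assms(3) by (rule vecmat_eq_0)
  then show ?thesis
    using assms(2) hamming_wt_simplex_codeword[OF G assms(4)]
    unfolding um_block_def hamming_wt_um_pair vecmat_add by (simp add: hamming_wt_def)
qed

lemma hamming_wt_um_block_ge:
  assumes G: "is_simplex_gen k G" and "nonzero_on k (U t)"
  shows "hamming_wt (um_n k) (um_block k G U t) \<ge> 2 ^ (k - 1)"
  using hamming_wt_simplex_codeword[OF assms] by (simp add: um_block_def hamming_wt_um_pair)

text \<open>The first nonzero information block contributes \<open>2^k\<close>, and the block right after the
  last nonzero one contributes \<open>2^(k-1)\<close>.\<close>
lemma sum_hamming_wt_um_block_ge:
  assumes G: "is_simplex_gen k G" and k: "k \<ge> 1"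
    and ne: "{t. nonzero_on k (U t)} \<noteq> {}" and sub: "{t. nonzero_on k (U t)} \<subseteq> {..<T}"
  shows "3 * 2 ^ (k - 1) \<le> (\<Sum>t<Suc T. hamming_wt (um_n k) (um_block k G U t))"
proof -
  define Z where "Z = {t. nonzero_on k (U t)}"
  have fin: "finite Z"
    using sub finite_subset unfolding Z_def by blast
  define a where "a = Min Z"
  define b where "b = Max Z"
  have "a \<in> Z" "b \<in> Z"
    using fin ne by (simp_all add: a_def b_def Z_def[symmetric])
  then have ab: "a \<le> b" and bT: "b < T"
    using fin sub by (auto simp: b_def Z_def)
  have "a - 1 \<notin> Z" if "a > 0"
  proof
    assume "a - 1 \<in> Z"
    then have "a \<le> a - 1"
      using fin by (simp add: a_def)
    then show False
      using that by simp
  qed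
  then have "hamming_wt (um_n k) (um_block k G U a) = 2 ^ k"
    using hamming_wt_um_block_start[OF G k] \<open>a \<in> Z\<close> by (auto simp: Z_def)
  moreover have "Suc b \<notin> Z"
  proof
    assume "Suc b \<in> Z"
    then have "Suc b \<le> b"
      using fin by (simp add: b_def)
    then show False
      by simp
  qed
  then have "hamming_wt (um_n k) (um_block k G U (Suc b)) = 2 ^ (k - 1)"
    using hamming_wt_um_block_end[OF G] \<open>b \<in> Z\<close> by (simp add: Z_def)
  moreover have "(\<Sum>t\<in>{a, Suc b}. hamming_wt (um_n k) (um_block k G U t))
      \<le> (\<Sum>t<Suc T. hamming_wt (um_n k) (um_block k G U t))"
    by (rule sum_mono2) (use ab bT in auto)
  ultimately show ?thesis
    using ab pow2_eq_double[OF k] by simp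
qed

definition impulse :: "nat \<Rightarrow> f2vec" where
  "impulse t i = (if t = 0 \<and> i = 0 then 1 else 0)"

lemma nonzero_on_impulse: "k \<ge> 1 \<Longrightarrow> nonzero_on k (impulse t) \<longleftrightarrow> t = 0"
  by (auto simp: nonzero_on_def impulse_def)

lemma hamming_wt_um_block_impulse_0:
  assumes "is_simplex_gen k G" and "k \<ge> 1"
  shows "hamming_wt (um_n k) (um_block k G impulse 0) = 2 ^ k"
  using assms by (simp add: hamming_wt_um_block_start nonzero_on_impulse)

lemma sum_hamming_wt_um_block_impulse:
  assumes G: "is_simplex_gen k G" and k: "k \<ge> 1" and T: "T \<ge> 1"
  shows "(\<Sum>t<Suc T. hamming_wt (um_n k) (um_block k G impulse t)) = 3 * 2 ^ (k - 1)"
proof -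
  have "(\<Sum>t<Suc T. hamming_wt (um_n k) (um_block k G impulse t))
      = (\<Sum>t\<in>{0, 1}. hamming_wt (um_n k) (um_block k G impulse t))"
    by (rule sum.mono_neutral_right)
      (use T k in \<open>auto simp: um_block_eq_0 hamming_wt_def nonzero_on_impulse\<close>)
  also have "\<dots> = 2 ^ k + 2 ^ (k - 1)"
    using hamming_wt_um_block_impulse_0[OF G k] hamming_wt_um_block_end[OF G, of 1 impulse] k
    by (simp add: nonzero_on_impulse)
  finally show ?thesis
    using pow2_eq_double[OF k] by simp
qed

section \<open>Column distances and free distance of the convolutional code\<close>

lemma Inf_setcompr_eqI:
  fixes f :: "'a \<Rightarrow> nat"
  assumes "P x" and "f x = d" and "\<And>y. P y \<Longrightarrow> d \<le> f y"
  shows "Inf {f y | y. P y} = d"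
  using assms by (intro cInf_eq_minimum) auto

definition um_encode :: "nat \<Rightarrow> f2mat \<Rightarrow> (nat \<Rightarrow> bit poly) \<Rightarrow> nat \<Rightarrow> bit poly" where
  "um_encode k G u = (\<lambda>j. if j < um_n k then (\<Sum>i<k. u i * um_GD k G i j) else 0)"

lemma um_code_eq_range: "um_code k G = range (um_encode k G)"
  by (auto simp: um_code_def um_encode_def)

lemma coeff_mult_linear:
  "coeff (p * [:a, b:]) t = a * coeff p t + (if t = 0 then 0 else b * coeff p (t - 1))"
  by (cases t) (simp_all add: mult.commute)

lemma coeff_um_encode:
  assumes "j < um_n k"
  shows "coeff (um_encode k G u j) t = um_block k G (\<lambda>t i. coeff (u i) t) t j"
proof -
  have "coeff (um_encode k G u j) t = (\<Sum>i<k. coeff (u i * um_GD k G i j) t)"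
    using assms by (simp add: um_encode_def coeff_sum)
  also have "\<dots> = um_block k G (\<lambda>t i. coeff (u i) t) t j"
    unfolding um_GD_def coeff_mult_linear
    by (simp add: um_block_def vecmat_def sum.distrib mult.commute)
  finally show ?thesis .
qed

lemma um_code_blocks:
  assumes "c \<in> um_code k G"
  obtains U D where "\<And>j t. j < um_n k \<Longrightarrow> coeff (c j) t = um_block k G U t j"
    and "\<And>t. t \<ge> D \<Longrightarrow> \<not> nonzero_on k (U t)"
proof -
  obtain u where c: "c = um_encode k G u"
    using assms by (auto simp: um_code_eq_range)
  define D where "D = (\<Sum>i<k. Suc (degree (u i)))"
  have "coeff (u i) t = 0" if "t \<ge> D" and "i < k" for i t
  proof (rule coeff_eq_0)
    have "Suc (degree (u i)) \<le> D"
      unfolding D_def by (rule member_le_sum) (use that in auto)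
    then show "degree (u i) < t"
      using that by simp
  qed
  then show ?thesis
    using that[of "\<lambda>t i. coeff (u i) t" D] by (auto simp: c coeff_um_encode nonzero_on_def)
qed

lemma um_block_nonzero:
  assumes "um_block k G U t m \<noteq> 0"
  shows "nonzero_on k (U t) \<or> (t > 0 \<and> nonzero_on k (U (t - 1)))"
proof (rule ccontr)
  assume "\<not> ?thesis"
  then have "um_block k G U t = 0"
    by (intro um_block_eq_0) auto
  with assms show False
    by simp
qed

lemma trunc_wt_eq_sum_um_block:
  assumes "\<And>j t. j < um_n k \<Longrightarrow> coeff (c j) t = um_block k G U t j"
  shows "trunc_wt (um_n k) J c = (\<Sum>t\<le>J. hamming_wt (um_n k) (um_block k G U t))"
proof -
  have "trunc_wt (um_n k) J c = (\<Sum>j<um_n k. card {t\<in>{..J}. um_block k G U t j \<noteq> 0})"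
    unfolding trunc_wt_def using assms by (auto intro!: sum.cong arg_cong[where f = card])
  also have "\<dots> = (\<Sum>t\<le>J. card {j\<in>{..<um_n k}. um_block k G U t j \<noteq> 0})"
    by (rule sum_card_swap) auto
  finally show ?thesis
    by (simp add: hamming_wt_def)
qed

lemma poly_wt_eq_trunc_wt:
  assumes "\<And>j t. j < N \<Longrightarrow> t > J \<Longrightarrow> coeff (c j) t = 0"
  shows "poly_wt N c = trunc_wt N J c"
  unfolding poly_wt_def trunc_wt_def
proof (intro sum.cong refl arg_cong[where f = card] Collect_cong)
  show "coeff (c j) t \<noteq> 0 \<longleftrightarrow> t \<le> J \<and> coeff (c j) t \<noteq> 0" if "j \<in> {..<N}" for j t
    using that assms[of j t] by (cases "t \<le> J") auto
qed

lemma um_encode_unit_blocks: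
  "j < um_n k \<Longrightarrow> coeff (um_encode k G (\<lambda>i. if i = 0 then 1 else 0) j) t = um_block k G impulse t j"
proof -
  have "(\<lambda>t i. coeff (if i = 0 then 1 else 0 :: bit poly) t) = impulse"
    by (auto simp: impulse_def fun_eq_iff)
  then show "j < um_n k \<Longrightarrow> ?thesis"
    by (simp add: coeff_um_encode)
qed

lemma um_encode_unit_nonzero:
  assumes "is_simplex_gen k G" and "k \<ge> 1"
  shows "\<exists>j<um_n k. coeff (um_encode k G (\<lambda>i. if i = 0 then 1 else 0) j) 0 \<noteq> 0"
proof -
  have "hamming_wt (um_n k) (um_block k G impulse 0) \<noteq> 0"
    using hamming_wt_um_block_impulse_0[OF assms] by simp
  then have "{j. j < um_n k \<and> um_block k G impulse 0 j \<noteq> 0} \<noteq> {}"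
    by (auto simp: hamming_wt_def)
  then show ?thesis
    by (auto simp: um_encode_unit_blocks)
qed

lemma column_distance_lower_bounds:
  assumes G: "is_simplex_gen k G" and k: "k \<ge> 1"
    and c: "c \<in> um_code k G" and nz: "\<exists>j<um_n k. coeff (c j) 0 \<noteq> 0"
  shows "trunc_wt (um_n k) 0 c = 2 ^ k"
    and "J \<ge> 1 \<Longrightarrow> 3 * 2 ^ (k - 1) \<le> trunc_wt (um_n k) J c"
proof -
  obtain U where U: "\<And>j t. j < um_n k \<Longrightarrow> coeff (c j) t = um_block k G U t j"
    using um_code_blocks[OF c] by metis
  have "nonzero_on k (U 0)"
    using nz U um_block_nonzero[of k G U 0] by auto
  then have start: "hamming_wt (um_n k) (um_block k G U 0) = 2 ^ k"
    by (simp add: hamming_wt_um_block_start[OF G k])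
  then show "trunc_wt (um_n k) 0 c = 2 ^ k"
    by (simp add: trunc_wt_eq_sum_um_block[OF U])
  assume J: "J \<ge> 1"
  have "hamming_wt (um_n k) (um_block k G U 1) \<ge> 2 ^ (k - 1)"
    using hamming_wt_um_block_ge[OF G] hamming_wt_um_block_end[OF G, of 1 U] \<open>nonzero_on k (U 0)\<close>
    by (cases "nonzero_on k (U 1)") auto
  moreover have "(\<Sum>t\<in>{0, 1}. hamming_wt (um_n k) (um_block k G U t))
      \<le> (\<Sum>t\<le>J. hamming_wt (um_n k) (um_block k G U t))"
    by (rule sum_mono2) (use J in auto)
  ultimately show "3 * 2 ^ (k - 1) \<le> trunc_wt (um_n k) J c"
    using start pow2_eq_double[OF k] by (simp add: trunc_wt_eq_sum_um_block[OF U])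
qed

lemma column_distance_0:
  assumes "is_simplex_gen k G" and "k \<ge> 1"
  shows "column_distance k G 0 = 2 ^ k"
  unfolding column_distance_def
  using um_code_eq_range um_encode_unit_nonzero[OF assms] column_distance_lower_bounds(1)[OF assms]
  by (intro Inf_setcompr_eqI[where x = "um_encode k G (\<lambda>i. if i = 0 then 1 else 0)"]) auto

lemma column_distance_ge_1:
  assumes G: "is_simplex_gen k G" and k: "k \<ge> 1" and J: "J \<ge> 1"
  shows "column_distance k G J = 3 * 2 ^ (k - 1)"
proof -
  define c where "c = um_encode k G (\<lambda>i. if i = 0 then 1 else 0)"
  have "trunc_wt (um_n k) J c = 3 * 2 ^ (k - 1)"
    using sum_hamming_wt_um_block_impulse[OF G k J]
    by (simp add: c_def trunc_wt_eq_sum_um_block um_encode_unit_blocks lessThan_Suc_atMost)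
  then show ?thesis
    unfolding column_distance_def
    using um_code_eq_range um_encode_unit_nonzero[OF G k] column_distance_lower_bounds(2)[OF G k _ _ J]
    by (intro Inf_setcompr_eqI[where x = c]) (auto simp: c_def)
qed

lemma free_distance_eq:
  assumes G: "is_simplex_gen k G" and k: "k \<ge> 1"
  shows "free_distance k G = 3 * 2 ^ (k - 1)"
  unfolding free_distance_def
proof (rule Inf_setcompr_eqI)
  define c where "c = um_encode k G (\<lambda>i. if i = 0 then 1 else 0)"
  show "c \<in> um_code k G \<and> (\<exists>j<um_n k. c j \<noteq> 0)"
    using um_encode_unit_nonzero[OF G k] by (fastforce simp: c_def um_code_eq_range)
  have "um_block k G impulse t = 0" if "t > 1" for t
    using that k by (intro um_block_eq_0) (auto simp: nonzero_on_impulse)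
  then have "poly_wt (um_n k) c = trunc_wt (um_n k) 1 c"
    by (intro poly_wt_eq_trunc_wt) (simp add: c_def um_encode_unit_blocks)
  also have "\<dots> = 3 * 2 ^ (k - 1)"
    using sum_hamming_wt_um_block_impulse[OF G k, of 1]
    by (simp add: c_def trunc_wt_eq_sum_um_block um_encode_unit_blocks lessThan_Suc_atMost)
  finally show "poly_wt (um_n k) c = 3 * 2 ^ (k - 1)" .
next
  fix c assume c: "c \<in> um_code k G \<and> (\<exists>j<um_n k. c j \<noteq> 0)"
  then obtain U D where U: "\<And>j t. j < um_n k \<Longrightarrow> coeff (c j) t = um_block k G U t j"
    and D: "\<And>t. t \<ge> D \<Longrightarrow> \<not> nonzero_on k (U t)"
    using um_code_blocks by blast
  obtain j t where j: "j < um_n k" "coeff (c j) t \<noteq> 0"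
    using c leading_coeff_0_iff by blast
  have "{t. nonzero_on k (U t)} \<noteq> {}"
    using um_block_nonzero j U by fastforce
  moreover have "{t. nonzero_on k (U t)} \<subseteq> {..<D}"
    using D not_less by blast
  moreover have "coeff (c j) t = 0" if "j < um_n k" "t > D" for j t
    using that D um_block_eq_0[of k U t G] U by simp
  then have "poly_wt (um_n k) c = (\<Sum>t<Suc D. hamming_wt (um_n k) (um_block k G U t))"
    by (simp add: poly_wt_eq_trunc_wt[of _ D] trunc_wt_eq_sum_um_block[OF U] lessThan_Suc_atMost)
  ultimately show "3 * 2 ^ (k - 1) \<le> poly_wt (um_n k) c"
    using sum_hamming_wt_um_block_ge[OF G k] by simp
qed

section \<open>Minimum distance of the truncated block code\<close>

definition split_blocks :: "nat \<Rightarrow> nat \<Rightarrow> f2vec \<Rightarrow> nat \<Rightarrow> f2vec" where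
  "split_blocks k s w t i = (if t \<le> s then w (t * k + i) else 0)"

lemma split_blocks_unit:
  "k \<ge> 1 \<Longrightarrow> split_blocks k s (\<lambda>r. if r = 0 then 1 else 0) = impulse"
  by (auto simp: split_blocks_def impulse_def fun_eq_iff)

lemma um_Gtotal_entry:
  assumes "i < k" and "q \<le> s" and "c < (s + 2) * um_n k"
  shows "um_Gtotal k G s (q * k + i) c =
    (if c div um_n k = q then um_G0 k G i (c mod um_n k)
     else if c div um_n k = Suc q then um_G1 k G i (c mod um_n k) else 0)"
  using assms mult_add_less_mult[of q "s + 1" i k] by (simp add: um_Gtotal_def)

lemma vecmat_um_Gtotal:
  assumes c: "c < (s + 2) * um_n k"
  shows "vecmat ((s + 1) * k) w (um_Gtotal k G s) c
     = um_block k G (split_blocks k s w) (c div um_n k) (c mod um_n k)"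
proof -
  define W where "W = split_blocks k s w"
  define p where "p = c div um_n k"
  define m where "m = c mod um_n k"
  have p: "p \<le> s + 1"
    using less_mult_imp_div_less[OF c] by (simp add: p_def)
  have "vecmat ((s + 1) * k) w (um_Gtotal k G s) c
      = (\<Sum>q<s + 1. \<Sum>i<k. w (q * k + i) * um_Gtotal k G s (q * k + i) c)"
    unfolding vecmat_def by (rule sum_lessThan_mult_blocks)
  also have "\<dots> = (\<Sum>q<s + 1. (if p = q then vecmat k (W q) (um_G0 k G) m else 0)
      + (if p = Suc q then vecmat k (W q) (um_G1 k G) m else 0))"
    using c by (intro sum.cong refl)
      (auto simp: um_Gtotal_entry vecmat_def W_def split_blocks_def p_def m_def intro!: sum.cong)
  also have "\<dots> = vecmat k (W p) (um_G0 k G) m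
      + vecmat k (if p = 0 then 0 else W (p - 1)) (um_G1 k G) m"
    using p by (cases p) (auto simp: sum.distrib W_def split_blocks_def vecmat_def)
  finally show ?thesis
    by (simp add: um_block_def W_def p_def m_def)
qed

definition um_block_encode :: "nat \<Rightarrow> f2mat \<Rightarrow> nat \<Rightarrow> f2vec \<Rightarrow> f2vec" where
  "um_block_encode k G s w =
     (\<lambda>j. if j < (s + 2) * um_n k then vecmat ((s + 1) * k) w (um_Gtotal k G s) j else 0)"

lemma block_code_um_Gtotal_eq_range:
  "block_code ((s + 1) * k) ((s + 2) * um_n k) (um_Gtotal k G s) = range (um_block_encode k G s)"
  unfolding block_code_def um_block_encode_def by blast

lemma um_block_encode_apply:
  assumes "j < (s + 2) * um_n k"
  shows "um_block_encode k G s w j = um_block k G (split_blocks k s w) (j div um_n k) (j mod um_n k)"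
  using assms vecmat_um_Gtotal[OF assms, of w G] by (simp add: um_block_encode_def)

lemma um_block_encode_add:
  "um_block_encode k G s (u + v) = um_block_encode k G s u + um_block_encode k G s v"
  by (simp add: um_block_encode_def vecmat_add fun_eq_iff)

lemma bit_neq_iff_add_eq_1: "(a::bit) \<noteq> b \<longleftrightarrow> a + b = 1"
  by (cases a; cases b) simp_all

lemma hamming_dist_eq_hamming_wt_add: "hamming_dist N x y = hamming_wt N (x + y)"
  by (simp add: hamming_dist_def hamming_wt_def bit_neq_iff_add_eq_1)

lemma hamming_wt_um_block_encode:
  "hamming_wt ((s + 2) * um_n k) (um_block_encode k G s w)
     = (\<Sum>t<s + 2. hamming_wt (um_n k) (um_block k G (split_blocks k s w) t))"
proof -
  have "hamming_wt ((s + 2) * um_n k) (um_block_encode k G s w)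
      = card {c. c < (s + 2) * um_n k \<and> um_block k G (split_blocks k s w) (c div um_n k) (c mod um_n k) \<noteq> 0}"
    unfolding hamming_wt_def
    by (intro arg_cong[where f = card] Collect_cong conj_cong refl) (simp add: um_block_encode_apply)
  also have "\<dots> = (\<Sum>t<s + 2. hamming_wt (um_n k) (um_block k G (split_blocks k s w) t))"
    unfolding hamming_wt_def by (rule card_div_mod_blocks)
  finally show ?thesis .
qed

lemma min_dist_um_block_code:
  assumes G: "is_simplex_gen k G" and k: "k \<ge> 1"
  shows "min_dist ((s + 2) * um_n k)
           (block_code ((s + 1) * k) ((s + 2) * um_n k) (um_Gtotal k G s)) = 3 * 2 ^ (k - 1)"
proof -
  let ?N = "(s + 2) * um_n k"
  let ?enc = "um_block_encode k G s"
  have dist_sum: "hamming_dist ?N (?enc u) (?enc v)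
      = (\<Sum>t<s + 2. hamming_wt (um_n k) (um_block k G (split_blocks k s (u + v)) t))" for u v
    unfolding hamming_dist_eq_hamming_wt_add um_block_encode_add[symmetric]
    by (rule hamming_wt_um_block_encode)
  define e :: f2vec where "e = (\<lambda>r. if r = 0 then 1 else 0)"
  have "hamming_dist ?N (?enc e) (?enc 0)
      = (\<Sum>t<s + 2. hamming_wt (um_n k) (um_block k G (split_blocks k s (e + 0)) t))"
    by (rule dist_sum)
  also have "split_blocks k s (e + 0) = impulse"
    using k by (simp add: e_def split_blocks_unit)
  also have "(\<Sum>t<s + 2. hamming_wt (um_n k) (um_block k G impulse t)) = 3 * 2 ^ (k - 1)"
    using sum_hamming_wt_um_block_impulse[OF G k, of "Suc s"] by simp
  finally have dist_e: "hamming_dist ?N (?enc e) (?enc 0) = 3 * 2 ^ (k - 1)" .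
  show ?thesis
    unfolding min_dist_def block_code_um_Gtotal_eq_range
  proof (rule cInf_eq_minimum)
    have "?enc e \<noteq> ?enc 0"
      using dist_e by (auto simp: hamming_dist_def)
    then show "3 * 2 ^ (k - 1) \<in> {hamming_dist ?N x y |x y. x \<in> range ?enc \<and> y \<in> range ?enc \<and> x \<noteq> y}"
      unfolding dist_e[symmetric] by blast
  next
    fix d assume "d \<in> {hamming_dist ?N x y |x y. x \<in> range ?enc \<and> y \<in> range ?enc \<and> x \<noteq> y}"
    then obtain u v where d: "d = hamming_dist ?N (?enc u) (?enc v)" and "?enc u \<noteq> ?enc v"
      by blast
    then obtain j where j: "?enc (u + v) j \<noteq> 0"
      by (auto simp: um_block_encode_add fun_eq_iff bit_neq_iff_add_eq_1)
    then have "j < ?N"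
      by (auto simp: um_block_encode_def split: if_splits)
    then have "um_block k G (split_blocks k s (u + v)) (j div um_n k) (j mod um_n k) \<noteq> 0"
      using j by (simp add: um_block_encode_apply)
    then have "{t. nonzero_on k (split_blocks k s (u + v) t)} \<noteq> {}"
      using um_block_nonzero by blast
    moreover have "{t. nonzero_on k (split_blocks k s (u + v) t)} \<subseteq> {..<Suc s}"
      by (auto simp: split_blocks_def nonzero_on_def)
    ultimately have "3 * 2 ^ (k - 1)
        \<le> (\<Sum>t<Suc (Suc s). hamming_wt (um_n k) (um_block k G (split_blocks k s (u + v)) t))"
      by (rule sum_hamming_wt_um_block_ge[OF G k])
    then show "3 * 2 ^ (k - 1) \<le> d"
      unfolding d dist_sum by simp
  qed
qed

theorem theorem5p1:
  fixes k :: nat and G :: "nat \<Rightarrow> nat \<Rightarrow> bit"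
  assumes "k \<ge> 2" and "is_simplex_gen k G"
  shows "(\<forall>s::nat. min_dist ((s + 2) * um_n k)
                     (block_code ((s + 1) * k) ((s + 2) * um_n k) (um_Gtotal k G s)) = 3 * 2^(k - 1))
    \<and> column_distance k G 0 = 2^k
    \<and> free_distance k G = 3 * 2^(k - 1)
    \<and> (\<forall>J\<ge>1. column_distance k G J = 3 * 2^(k - 1))"
proof -
  have k: "k \<ge> 1"
    using assms(1) by simp
  show ?thesis
    using min_dist_um_block_code[OF assms(2) k] column_distance_0[OF assms(2) k]
      free_distance_eq[OF assms(2) k] column_distance_ge_1[OF assms(2) k] by blast
qed

end
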